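(* Assume $\sigma\in C^2(\mathbb{R})$. Then $$\big\|\mathrm{Cov}(\hat{\mathcal{I}}_2(\theta))\big\|_F\le\frac1N\,\Big\|\frac{\partial^2h_L(x)}{\partial\theta\partial\theta^\top}\Big\|_F^2\,\|\mathcal{I}(h_L)\|_F.$$
   Context: Setup. Fix an input $x\in\mathbb{R}^{n_0}$ and integers $L\ge1$, $n_1,\dots,n_L\ge1$. Network. The parameters are $\theta=(W_0,\dots,W_{L-1})$, with $W_l\in\mathbb{R}^{n_{l+1}\times(n_l+1)}$, viewed as a vector in $\mathbb{R}^{\dim\theta}$. Let $\sigma$ be applied entrywise. Set $h_0=x$ and $\bar h_l=(h_l^\top,1)^\top$. For $1\le l\le L-1$ let $h_l=\sigma(W_{l-1}\bar h_{l-1})$, and let $h_L=W_{L-1}\bar h_{L-1}\in\mathbb{R}^{n_L}$. Exponential family. The model is $p(y\mid x,\theta)=\exp(t(y)^\top h_L-F(h_L))$ with respect to a base measure $\nu$, where $t(y)\in\mathbb{R}^{n_L}$ and $F(h)=\log\int\exp(t(y)^\top h)\,d\nu(y)$. Assume $h_L$ lies in the interior of the natural parameter space. Write $\mathcal{I}(h_L)=\nabla^2F(h_L)=\mathrm{Cov}(t(y))$, with $y\sim p(y\mid x,\theta)$. Estimator. Let $\ell=\log p(y\mid x,\theta)$. With $N$ i.i.d. samples $y_i\sim p(y\mid x,\theta)$ and $\ell_i=\log p(y_i\mid x,\theta)$, let $\hat{\mathcal{I}}_2(\theta)=\frac1N\sum_i(-\frac{\partial^2\ell_i}{\partial\theta\partial\theta^\top})$.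 Notation. $\mathrm{Cov}(\hat{\mathcal{I}}_2(\theta))$ is the 4-tensor with entries $\mathrm{Cov}(\hat{\mathcal{I}}_2^{ij},\hat{\mathcal{I}}_2^{kl})$. $\frac{\partial^2h_L}{\partial\theta\partial\theta^\top}$ is the $n_L\times\dim\theta\times\dim\theta$ tensor of second derivatives. $\|\cdot\|_F$ is the square root of the sum of squared entries. *)

theory Defs
  imports "HOL-Probability.Probability"
begin

definition C2 :: "(real \<Rightarrow> real) \<Rightarrow> bool" where
  "C2 f \<longleftrightarrow> (\<exists>f' f''. (\<forall>z. (f has_real_derivative f' z) (at z)) \<and>
                     (\<forall>z. (f' has_real_derivative f'' z) (at z)) \<and> continuous_on UNIV f'')"

text \<open>Parameters: W(l,i,j) is entry (i,j) of W_l, with column j = n l the bias column.\<close>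
type_synonym params = "nat \<times> nat \<times> nat \<Rightarrow> real"

definition param_index :: "nat \<Rightarrow> (nat \<Rightarrow> nat) \<Rightarrow> (nat \<times> nat \<times> nat) set" where
  "param_index L n = {(l,i,j). l < L \<and> i < n (Suc l) \<and> j \<le> n l}"

fun layer :: "(real \<Rightarrow> real) \<Rightarrow> nat \<Rightarrow> (nat \<Rightarrow> nat) \<Rightarrow> params \<Rightarrow> (nat \<Rightarrow> real) \<Rightarrow> nat \<Rightarrow> (nat \<Rightarrow> real)" where
  "layer \<sigma> L n W x 0 = x"
| "layer \<sigma> L n W x (Suc l) =
     (\<lambda>i. let z = (\<Sum>j\<le>n l. W (l,i,j) * (if j < n l then layer \<sigma> L n W x l j else 1))
          in if Suc l < L then \<sigma> z else z)"

definition net_out :: "(real \<Rightarrow> real) \<Rightarrow> nat \<Rightarrow> (nat \<Rightarrow> nat) \<Rightarrow> params \<Rightarrow> (nat \<Rightarrow> real) \<Rightarrow> nat \<Rightarrow> real" where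
  "net_out \<sigma> L n W x = layer \<sigma> L n W x L"

definition partial :: "nat \<times> nat \<times> nat \<Rightarrow> (params \<Rightarrow> real) \<Rightarrow> params \<Rightarrow> real" where
  "partial p f W = deriv (\<lambda>v. f (W(p := v))) (W p)"

definition partial2 :: "nat \<times> nat \<times> nat \<Rightarrow> nat \<times> nat \<times> nat \<Rightarrow> (params \<Rightarrow> real) \<Rightarrow> params \<Rightarrow> real" where
  "partial2 p q f W = partial p (\<lambda>W'. partial q f W') W"

text \<open>Exponential family with sufficient statistic t (components a < m) w.r.t. base measure nu.\<close>
definition log_partition :: "'y measure \<Rightarrow> ('y \<Rightarrow> nat \<Rightarrow> real) \<Rightarrow> nat \<Rightarrow> (nat \<Rightarrow> real) \<Rightarrow> real" where
  "log_partition \<nu> t m h = ln (LINT y|\<nu>. exp (\<Sum>a<m. t y a * h a))"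

definition nat_param_interior :: "'y measure \<Rightarrow> ('y \<Rightarrow> nat \<Rightarrow> real) \<Rightarrow> nat \<Rightarrow> (nat \<Rightarrow> real) \<Rightarrow> bool" where
  "nat_param_interior \<nu> t m h \<longleftrightarrow>
     (\<exists>\<epsilon>>0. \<forall>h'. (\<forall>a<m. \<bar>h' a - h a\<bar> < \<epsilon>) \<longrightarrow>
        (\<integral>\<^sup>+ y. ennreal (exp (\<Sum>a<m. t y a * h' a)) \<partial>\<nu>) < \<infinity>)"

definition model_dist :: "'y measure \<Rightarrow> ('y \<Rightarrow> nat \<Rightarrow> real) \<Rightarrow> nat \<Rightarrow> (nat \<Rightarrow> real) \<Rightarrow> 'y measure" where
  "model_dist \<nu> t m h =
     density \<nu> (\<lambda>y. ennreal (exp ((\<Sum>a<m. t y a * h a) - log_partition \<nu> t m h)))"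

definition covariance :: "'a measure \<Rightarrow> ('a \<Rightarrow> real) \<Rightarrow> ('a \<Rightarrow> real) \<Rightarrow> real" where
  "covariance M X Y = (LINT \<omega>|M. (X \<omega> - integral\<^sup>L M X) * (Y \<omega> - integral\<^sup>L M Y))"

definition loglik :: "(real \<Rightarrow> real) \<Rightarrow> nat \<Rightarrow> (nat \<Rightarrow> nat) \<Rightarrow> (nat \<Rightarrow> real) \<Rightarrow> 'y measure
     \<Rightarrow> ('y \<Rightarrow> nat \<Rightarrow> real) \<Rightarrow> 'y \<Rightarrow> params \<Rightarrow> real" where
  "loglik \<sigma> L n x \<nu> t y W =
     (\<Sum>a<n L. t y a * net_out \<sigma> L n W x a) - log_partition \<nu> t (n L) (net_out \<sigma> L n W x)"

definition I2hat :: "(real \<Rightarrow> real) \<Rightarrow> nat \<Rightarrow> (nat \<Rightarrow> nat) \<Rightarrow> (nat \<Rightarrow> real) \<Rightarrow> 'y measure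
     \<Rightarrow> ('y \<Rightarrow> nat \<Rightarrow> real) \<Rightarrow> nat \<Rightarrow> params \<Rightarrow> nat \<times> nat \<times> nat \<Rightarrow> nat \<times> nat \<times> nat
     \<Rightarrow> (nat \<Rightarrow> 'y) \<Rightarrow> real" where
  "I2hat \<sigma> L n x \<nu> t N \<theta> p q ys =
     (1 / real N) * (\<Sum>i<N. - partial2 p q (loglik \<sigma> L n x \<nu> t (ys i)) \<theta>)"

definition sample_law :: "(real \<Rightarrow> real) \<Rightarrow> nat \<Rightarrow> (nat \<Rightarrow> nat) \<Rightarrow> (nat \<Rightarrow> real) \<Rightarrow> 'y measure
     \<Rightarrow> ('y \<Rightarrow> nat \<Rightarrow> real) \<Rightarrow> nat \<Rightarrow> params \<Rightarrow> (nat \<Rightarrow> 'y) measure" where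
  "sample_law \<sigma> L n x \<nu> t N \<theta> =
     PiM {..<N} (\<lambda>_. model_dist \<nu> t (n L) (net_out \<sigma> L n \<theta> x))"

end

theory Submission
  imports Defs
begin

text \<open>
  Since l = t(y)^T h_L(theta) - F(h_L(theta)), the Hessian of l in theta is
  sum_a t(y)_a H_a - D^2 F(h_L(theta)) with H_a the Hessian of the output h_L,a, and the second term
  does not depend on the sample. Hence every entry of the estimator is a constant plus an average
  of N i.i.d. linear forms in t(y), so that its covariance tensor is
  (1/N) sum_(a,b) H_a(p,q) H_b(r,s) Cov(t_a, t_b), and the Cauchy-Schwarz inequality in the index
  pair (a,b) gives the Frobenius bound. The analytic work is the twice partial differentiability of
  F(h_L(theta)): differentiation under the integral sign, dominated on a box around h_L(theta)
  inside the natural parameter space.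
\<close>

section \<open>Coordinatewise derivatives\<close>

definition has_partial_deriv :: "(params \<Rightarrow> real) \<Rightarrow> nat \<times> nat \<times> nat \<Rightarrow> params \<Rightarrow> real \<Rightarrow> bool" where
  "has_partial_deriv f p W d \<longleftrightarrow> ((\<lambda>v. f (W(p := v))) has_real_derivative d) (at (W p))"

definition coord_differentiable :: "(params \<Rightarrow> real) \<Rightarrow> bool" where
  "coord_differentiable f \<longleftrightarrow> (\<forall>W p. \<exists>d. has_partial_deriv f p W d)"

definition coord_differentiable2 :: "(params \<Rightarrow> real) \<Rightarrow> bool" where
  "coord_differentiable2 f \<longleftrightarrow> coord_differentiable f \<and> (\<forall>q. coord_differentiable (partial q f))"

lemma partial_eqI: "has_partial_deriv f p W d \<Longrightarrow> partial p f W = d"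
  unfolding has_partial_deriv_def partial_def by (rule DERIV_imp_deriv)

lemma has_partial_deriv_partial: "coord_differentiable f \<Longrightarrow> has_partial_deriv f p W (partial p f W)"
  using partial_eqI unfolding coord_differentiable_def by metis

lemma DERIV_fun_upd_partial:
  "coord_differentiable f \<Longrightarrow> ((\<lambda>v. f (W(p := v))) has_real_derivative partial p f (W(p := u))) (at u)"
  using has_partial_deriv_partial[of f p "W(p := u)"] unfolding has_partial_deriv_def by simp

lemma has_partial_deriv_const: "has_partial_deriv (\<lambda>_. c) p W 0"
  unfolding has_partial_deriv_def by simp

lemma has_partial_deriv_coord: "has_partial_deriv (\<lambda>W. W r) p W (if r = p then 1 else 0)"
  unfolding has_partial_deriv_def by (cases "r = p") auto

lemma has_partial_deriv_add:
  "has_partial_deriv f p W a \<Longrightarrow> has_partial_deriv g p W b \<Longrightarrow> has_partial_deriv (\<lambda>W. f W + g W) p W (a + b)"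
  unfolding has_partial_deriv_def by (rule DERIV_add)

lemma has_partial_deriv_mult:
  "has_partial_deriv f p W a \<Longrightarrow> has_partial_deriv g p W b \<Longrightarrow>
   has_partial_deriv (\<lambda>W. f W * g W) p W (f W * b + a * g W)"
  unfolding has_partial_deriv_def by (drule (1) DERIV_mult) (simp add: ac_simps)

lemma has_partial_deriv_comp:
  "(\<And>z. (g has_real_derivative g' z) (at z)) \<Longrightarrow> has_partial_deriv f p W a \<Longrightarrow>
   has_partial_deriv (\<lambda>W. g (f W)) p W (g' (f W) * a)"
  unfolding has_partial_deriv_def using DERIV_chain2[of g "g' (f W)" "\<lambda>v. f (W(p := v))" "W p" a] by simp

lemma coord_differentiable_const: "coord_differentiable (\<lambda>_. c)"
  unfolding coord_differentiable_def using has_partial_deriv_const by blast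

lemma coord_differentiable_coord: "coord_differentiable (\<lambda>W. W r)"
  unfolding coord_differentiable_def using has_partial_deriv_coord by blast

lemma coord_differentiable_add:
  "coord_differentiable f \<Longrightarrow> coord_differentiable g \<Longrightarrow> coord_differentiable (\<lambda>W. f W + g W)"
  unfolding coord_differentiable_def using has_partial_deriv_add by blast

lemma coord_differentiable_mult:
  "coord_differentiable f \<Longrightarrow> coord_differentiable g \<Longrightarrow> coord_differentiable (\<lambda>W. f W * g W)"
  unfolding coord_differentiable_def using has_partial_deriv_mult by blast

lemma coord_differentiable_comp:
  "(\<And>z. (g has_real_derivative g' z) (at z)) \<Longrightarrow> coord_differentiable f \<Longrightarrow>
   coord_differentiable (\<lambda>W. g (f W))"
  unfolding coord_differentiable_def using has_partial_deriv_comp by blast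

lemma partial_const: "partial p (\<lambda>_. c) = (\<lambda>_. 0)"
  by (rule ext, rule partial_eqI, rule has_partial_deriv_const)

lemma partial_coord: "partial p (\<lambda>W. W r) = (\<lambda>_. if r = p then 1 else 0)"
  by (rule ext, rule partial_eqI, rule has_partial_deriv_coord)

lemma partial_add:
  "coord_differentiable f \<Longrightarrow> coord_differentiable g \<Longrightarrow>
   partial p (\<lambda>W. f W + g W) = (\<lambda>W. partial p f W + partial p g W)"
  by (rule ext, rule partial_eqI, intro has_partial_deriv_add has_partial_deriv_partial)

lemma partial_mult:
  "coord_differentiable f \<Longrightarrow> coord_differentiable g \<Longrightarrow>
   partial p (\<lambda>W. f W * g W) = (\<lambda>W. f W * partial p g W + partial p f W * g W)"
  by (rule ext, rule partial_eqI, intro has_partial_deriv_mult has_partial_deriv_partial)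

lemma partial_comp:
  "(\<And>z. (g has_real_derivative g' z) (at z)) \<Longrightarrow> coord_differentiable f \<Longrightarrow>
   partial p (\<lambda>W. g (f W)) = (\<lambda>W. g' (f W) * partial p f W)"
  by (rule ext, rule partial_eqI, intro has_partial_deriv_comp has_partial_deriv_partial)

lemma has_partial_deriv_linear_combination:
  "finite A \<Longrightarrow> (\<And>a. a \<in> A \<Longrightarrow> coord_differentiable (f a)) \<Longrightarrow>
   has_partial_deriv (\<lambda>W. \<Sum>a\<in>A. c a * f a W) p W (\<Sum>a\<in>A. c a * partial p (f a) W)"
  using has_partial_deriv_partial unfolding has_partial_deriv_def by (intro DERIV_sum DERIV_cmult) auto

lemma coord_differentiable2_imp_coord_differentiable:
  "coord_differentiable2 f \<Longrightarrow> coord_differentiable f"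
  unfolding coord_differentiable2_def by simp

lemma coord_differentiable2_imp_partial:
  "coord_differentiable2 f \<Longrightarrow> coord_differentiable (partial q f)"
  unfolding coord_differentiable2_def by blast

lemma coord_differentiable2_const: "coord_differentiable2 (\<lambda>_. c)"
  unfolding coord_differentiable2_def by (simp add: coord_differentiable_const partial_const)

lemma coord_differentiable2_coord: "coord_differentiable2 (\<lambda>W. W r)"
  unfolding coord_differentiable2_def
  by (simp add: coord_differentiable_coord partial_coord coord_differentiable_const)

lemma coord_differentiable2_add:
  "coord_differentiable2 f \<Longrightarrow> coord_differentiable2 g \<Longrightarrow> coord_differentiable2 (\<lambda>W. f W + g W)"
  unfolding coord_differentiable2_def by (simp add: coord_differentiable_add partial_add)

lemma coord_differentiable2_mult:
  "coord_differentiable2 f \<Longrightarrow> coord_differentiable2 g \<Longrightarrow> coord_differentiable2 (\<lambda>W. f W * g W)"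
  unfolding coord_differentiable2_def
  by (simp add: coord_differentiable_add coord_differentiable_mult partial_mult)

lemma coord_differentiable2_sum:
  "finite A \<Longrightarrow> (\<And>i. i \<in> A \<Longrightarrow> coord_differentiable2 (f i)) \<Longrightarrow> coord_differentiable2 (\<lambda>W. \<Sum>i\<in>A. f i W)"
  by (induction A rule: finite_induct) (auto intro: coord_differentiable2_const coord_differentiable2_add)

lemma coord_differentiable2_comp:
  assumes "\<And>z. (g has_real_derivative g' z) (at z)" "\<And>z. (g' has_real_derivative g'' z) (at z)"
    and "coord_differentiable2 f"
  shows "coord_differentiable2 (\<lambda>W. g (f W))"
  unfolding coord_differentiable2_def
    partial_comp[OF assms(1) coord_differentiable2_imp_coord_differentiable[OF assms(3)]]
  by (intro conjI allI coord_differentiable_comp[OF assms(1)] coord_differentiable_mult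
      coord_differentiable_comp[OF assms(2)] coord_differentiable2_imp_coord_differentiable
      coord_differentiable2_imp_partial assms(3))

lemma coord_differentiable2_layer:
  assumes "C2 \<sigma>"
  shows "coord_differentiable2 (\<lambda>W. layer \<sigma> L n W x l i)"
proof -
  obtain \<sigma>' \<sigma>'' where \<sigma>': "\<And>z. (\<sigma> has_real_derivative \<sigma>' z) (at z)"
    and \<sigma>'': "\<And>z. (\<sigma>' has_real_derivative \<sigma>'' z) (at z)"
    using assms unfolding C2_def by blast
  show ?thesis
  proof (induction l arbitrary: i)
    case 0
    then show ?case by (simp add: coord_differentiable2_const)
  next
    case (Suc l)
    have bias: "coord_differentiable2 (\<lambda>W. if j < n l then layer \<sigma> L n W x l j else 1)" for j
      by (cases "j < n l") (simp_all add: Suc coord_differentiable2_const)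
    have "coord_differentiable2
        (\<lambda>W. \<Sum>j\<le>n l. W (l,i,j) * (if j < n l then layer \<sigma> L n W x l j else 1))"
      by (intro coord_differentiable2_sum coord_differentiable2_mult coord_differentiable2_coord bias) simp
    then show ?case
      by (cases "Suc l < L") (simp_all add: Let_def coord_differentiable2_comp[OF \<sigma>' \<sigma>''])
  qed
qed

lemma coord_differentiable2_net_out: "C2 \<sigma> \<Longrightarrow> coord_differentiable2 (\<lambda>W. net_out \<sigma> L n W x a)"
  unfolding net_out_def by (rule coord_differentiable2_layer)

section \<open>Differentiation under the integral sign\<close>

lemma difference_quotient_bound:
  fixes g g' :: "real \<Rightarrow> real"
  assumes deriv: "\<And>v. v \<in> ball v0 r \<Longrightarrow> (g has_real_derivative g' v) (at v)"
    and bound: "\<And>v. v \<in> ball v0 r \<Longrightarrow> \<bar>g' v\<bar> \<le> B"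
    and u: "u \<in> ball v0 r" "u \<noteq> v0"
  shows "\<bar>(g u - g v0) / (u - v0)\<bar> \<le> B"
proof -
  obtain z where z: "z \<in> ball v0 r" "(g u - g v0) / (u - v0) = g' z"
  proof (cases "v0 < u")
    case True
    have "\<And>v. v0 \<le> v \<Longrightarrow> v \<le> u \<Longrightarrow> v \<in> ball v0 r" using u by (auto simp: dist_real_def)
    then obtain z where "v0 < z" "z < u" "g u - g v0 = (u - v0) * g' z"
      using MVT2[OF True, of g g'] deriv by blast
    with u True show ?thesis by (intro that[of z]) (auto simp: dist_real_def)
  next
    case False
    then have less: "u < v0" using u by auto
    have "\<And>v. u \<le> v \<Longrightarrow> v \<le> v0 \<Longrightarrow> v \<in> ball v0 r" using u by (auto simp: dist_real_def)
    then obtain z where "u < z" "z < v0" "g v0 - g u = (v0 - u) * g' z"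
      using MVT2[OF less, of g g'] deriv by blast
    with u less show ?thesis by (intro that[of z]) (auto simp: dist_real_def field_simps)
  qed
  with bound show ?thesis by simp
qed

text \<open>The difference quotients along any sequence converging to \<open>v0\<close> are dominated by \<open>D\<close>
  (mean value theorem), so dominated convergence applies to them.\<close>

lemma DERIV_integral_dominated:
  fixes f f' :: "real \<Rightarrow> 'a \<Rightarrow> real" and D :: "'a \<Rightarrow> real"
  assumes r: "0 < r"
    and deriv: "\<And>v y. v \<in> ball v0 r \<Longrightarrow> y \<in> space M \<Longrightarrow>
      ((\<lambda>u. f u y) has_real_derivative f' v y) (at v)"
    and integrable: "\<And>v. v \<in> ball v0 r \<Longrightarrow> integrable M (f v)"
    and measurable: "f' v0 \<in> borel_measurable M"
    and integrable_D: "integrable M D"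
    and bound: "\<And>v y. v \<in> ball v0 r \<Longrightarrow> y \<in> space M \<Longrightarrow> \<bar>f' v y\<bar> \<le> D y"
  shows "((\<lambda>v. \<integral>y. f v y \<partial>M) has_real_derivative (\<integral>y. f' v0 y \<partial>M)) (at v0)"
  unfolding has_field_derivative_iff
proof (subst tendsto_at_iff_sequentially, intro allI impI)
  fix X :: "nat \<Rightarrow> real"
  assume X: "\<forall>i. X i \<in> UNIV - {v0}" and lim: "X \<longlonglongrightarrow> v0"
  have "eventually (\<lambda>i. X i \<in> ball v0 r) sequentially"
    using lim r by (simp add: tendsto_iff dist_commute)
  then obtain N0 where N0: "\<And>i. i \<ge> N0 \<Longrightarrow> X i \<in> ball v0 r"
    by (auto simp: eventually_sequentially)
  have v0: "v0 \<in> ball v0 r" using r by simp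
  define s where "s k y = (f (X (k + N0)) y - f v0 y) / (X (k + N0) - v0)" for k y
  have X_ball: "X (k + N0) \<in> ball v0 r" for k using N0 by simp
  have X_ne: "X (k + N0) \<noteq> v0" for k using X by auto
  have "(\<lambda>k. \<integral>y. s k y \<partial>M) \<longlonglongrightarrow> (\<integral>y. f' v0 y \<partial>M)"
  proof (rule integral_dominated_convergence[where w=D])
    show "s k \<in> borel_measurable M" for k
      unfolding s_def using integrable[OF X_ball] integrable[OF v0] by measurable
    show "AE y in M. (\<lambda>k. s k y) \<longlonglongrightarrow> f' v0 y"
    proof (rule AE_I2)
      fix y assume y: "y \<in> space M"
      have "((\<lambda>u. (f u y - f v0 y) / (u - v0)) \<longlongrightarrow> f' v0 y) (at v0)"
        using deriv[OF v0 y] unfolding has_field_derivative_iff by simp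
      then have "((\<lambda>u. (f u y - f v0 y) / (u - v0)) \<circ> X) \<longlonglongrightarrow> f' v0 y"
        using X lim unfolding tendsto_at_iff_sequentially by blast
      then show "(\<lambda>k. s k y) \<longlonglongrightarrow> f' v0 y"
        unfolding s_def o_def by (rule LIMSEQ_ignore_initial_segment)
    qed
    show "AE y in M. norm (s k y) \<le> D y" for k
      unfolding s_def real_norm_def
      by (intro AE_I2 difference_quotient_bound[where r=r and g'="\<lambda>v. f' v _"])
        (use deriv bound X_ball X_ne in auto)
  qed (use measurable integrable_D in auto)
  moreover have "(\<integral>y. s k y \<partial>M)
      = ((\<lambda>u. ((\<integral>y. f u y \<partial>M) - (\<integral>y. f v0 y \<partial>M)) / (u - v0)) \<circ> X) (k + N0)" for k
    unfolding s_def o_def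
    by (subst integral_divide_zero)
      (simp add: Bochner_Integration.integral_diff[OF integrable[OF X_ball] integrable[OF v0]])
  ultimately show "((\<lambda>u. ((\<integral>y. f u y \<partial>M) - (\<integral>y. f v0 y \<partial>M)) / (u - v0)) \<circ> X) \<longlonglongrightarrow> (\<integral>y. f' v0 y \<partial>M)"
    by (simp add: LIMSEQ_offset)
qed

section \<open>Covariances of i.i.d. sums\<close>

lemma integrable_centered_product:
  fixes f g :: "'y \<Rightarrow> real"
  assumes "finite_measure M" "integrable M f" "integrable M g" "integrable M (\<lambda>y. f y * g y)"
  shows "integrable M (\<lambda>y. (f y - a) * (g y - b))"
proof -
  interpret finite_measure M by fact
  have "(\<lambda>y. (f y - a) * (g y - b)) = (\<lambda>y. f y * g y - b * f y - a * g y + a * b)"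
    by (auto simp: algebra_simps)
  then show ?thesis using assms by auto
qed

lemma
  fixes \<phi> \<psi> :: "'y \<Rightarrow> real" and N :: nat
  assumes "prob_space M" "integrable M \<phi>" "integrable M \<psi>" "integrable M (\<lambda>y. \<phi> y * \<psi> y)"
    and "i < N" "j < N"
  shows integrable_PiM_coordinates: "integrable (PiM {..<N} (\<lambda>_. M)) (\<lambda>ys. \<phi> (ys i) * \<psi> (ys j))"
    and integral_PiM_coordinates: "(\<integral>ys. \<phi> (ys i) * \<psi> (ys j) \<partial>PiM {..<N} (\<lambda>_. M))
      = (if i = j then \<integral>y. \<phi> y * \<psi> y \<partial>M else integral\<^sup>L M \<phi> * integral\<^sup>L M \<psi>)"
proof -
  interpret prob_space M by fact
  interpret product_sigma_finite "\<lambda>_. M" by unfold_locales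
  define F where "F k = (\<lambda>y. (if k = i then \<phi> y else 1) * (if k = j then \<psi> y else 1))" for k
  have integrable_F: "integrable M (F k)" for k
    by (cases "k = i"; cases "k = j") (simp_all add: F_def assms)
  have prod_F: "(\<Prod>k<N. F k (ys k)) = \<phi> (ys i) * \<psi> (ys j)" for ys
    using assms by (simp add: F_def prod.distrib)
  have "(\<Prod>k<N. integral\<^sup>L M (F k))
      = (if i = j then \<integral>y. \<phi> y * \<psi> y \<partial>M else integral\<^sup>L M \<phi> * integral\<^sup>L M \<psi>)"
  proof (cases "i = j")
    case True
    then have "integral\<^sup>L M (F k) = (if k = i then \<integral>y. \<phi> y * \<psi> y \<partial>M else 1)" for k
      by (simp add: F_def prob_space)
    with True assms show ?thesis by simp
  next
    case False
    then have "integral\<^sup>L M (F k)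
        = (if k = i then integral\<^sup>L M \<phi> else 1) * (if k = j then integral\<^sup>L M \<psi> else 1)" for k
      by (auto simp: F_def prob_space)
    with False assms show ?thesis by (simp add: prod.distrib)
  qed
  moreover note product_integral_prod[of "{..<N}" F] product_integrable_prod[of "{..<N}" F]
  ultimately show "integrable (PiM {..<N} (\<lambda>_. M)) (\<lambda>ys. \<phi> (ys i) * \<psi> (ys j))"
    and "(\<integral>ys. \<phi> (ys i) * \<psi> (ys j) \<partial>PiM {..<N} (\<lambda>_. M))
      = (if i = j then \<integral>y. \<phi> y * \<psi> y \<partial>M else integral\<^sup>L M \<phi> * integral\<^sup>L M \<psi>)"
    by (simp_all add: prod_F integrable_F)
qed

lemma covariance_sum_iid:
  fixes f g :: "'y \<Rightarrow> real" and N :: nat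
  assumes M: "prob_space M"
    and integrable: "integrable M f" "integrable M g" "integrable M (\<lambda>y. f y * g y)"
  shows "covariance (PiM {..<N} (\<lambda>_. M)) (\<lambda>ys. c + (\<Sum>i<N. f (ys i))) (\<lambda>ys. d + (\<Sum>i<N. g (ys i)))
     = real N * covariance M f g"
proof -
  interpret prob_space M by fact
  let ?P = "PiM {..<N} (\<lambda>_. M)"
  interpret P: prob_space ?P by (intro prob_space_PiM) (auto simp: prob_space_axioms)
  define f0 where "f0 y = f y - integral\<^sup>L M f" for y
  define g0 where "g0 y = g y - integral\<^sup>L M g" for y
  have integrable_0: "integrable M f0" "integrable M g0" "integrable M (\<lambda>y. f0 y * g0 y)"
    unfolding f0_def g0_def using integrable
    by (auto intro: integrable_centered_product finite_measure_axioms)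
  have mean_0: "integral\<^sup>L M f0 = 0" "integral\<^sup>L M g0 = 0"
    unfolding f0_def g0_def using integrable by (simp_all add: prob_space)
  have mean_sum: "(\<integral>ys. c + (\<Sum>i<N. h (ys i)) \<partial>?P) = c + real N * integral\<^sup>L M h"
    if h: "integrable M h" for h :: "'y \<Rightarrow> real" and c
  proof -
    have "integrable ?P (\<lambda>ys. h (ys i))" "(\<integral>ys. h (ys i) \<partial>?P) = integral\<^sup>L M h" if "i < N" for i
      using integrable_PiM_coordinates[OF M h, where \<psi>="\<lambda>_. 1" and N=N and i=i and j=i]
        integral_PiM_coordinates[OF M h, where \<psi>="\<lambda>_. 1" and N=N and i=i and j=i] that h
      by simp_all
    note coordinate = this
    then have "integrable ?P (\<lambda>ys. \<Sum>i<N. h (ys i))" by auto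
    with coordinate show ?thesis
      by (simp add: Bochner_Integration.integral_add Bochner_Integration.integral_sum P.prob_space)
  qed
  have center: "c + (\<Sum>i<N. f (ys i)) - (c + real N * integral\<^sup>L M f) = (\<Sum>i<N. f0 (ys i))"
    "d + (\<Sum>i<N. g (ys i)) - (d + real N * integral\<^sup>L M g) = (\<Sum>i<N. g0 (ys i))" for ys
    by (simp_all add: f0_def g0_def sum_subtractf)
  have pair: "integrable ?P (\<lambda>ys. f0 (ys i) * g0 (ys j))"
    "(\<integral>ys. f0 (ys i) * g0 (ys j) \<partial>?P) = (if i = j then covariance M f g else 0)"
    if "i < N" "j < N" for i j
    using integrable_PiM_coordinates[OF M integrable_0 that] integral_PiM_coordinates[OF M integrable_0 that]
    by (simp_all add: mean_0 covariance_def f0_def g0_def)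
  have "covariance ?P (\<lambda>ys. c + (\<Sum>i<N. f (ys i))) (\<lambda>ys. d + (\<Sum>i<N. g (ys i)))
      = (\<integral>ys. (\<Sum>i<N. f0 (ys i)) * (\<Sum>j<N. g0 (ys j)) \<partial>?P)"
    unfolding covariance_def mean_sum[OF integrable(1)] mean_sum[OF integrable(2)] center ..
  also have "\<dots> = (\<Sum>i<N. \<Sum>j<N. \<integral>ys. f0 (ys i) * g0 (ys j) \<partial>?P)"
    unfolding sum_product using pair
    by (subst Bochner_Integration.integral_sum) (auto intro!: integrable_sum sum.cong Bochner_Integration.integral_sum)
  also have "\<dots> = real N * covariance M f g"
    using pair by simp
  finally show ?thesis .
qed

lemma covariance_linear:
  fixes T :: "'y \<Rightarrow> nat \<Rightarrow> real"
  assumes "finite_measure M"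
    and integrable: "\<And>a. a < m \<Longrightarrow> integrable M (\<lambda>y. T y a)"
      "\<And>a b. a < m \<Longrightarrow> b < m \<Longrightarrow> integrable M (\<lambda>y. T y a * T y b)"
  shows "covariance M (\<lambda>y. \<Sum>a<m. \<alpha> a * T y a) (\<lambda>y. \<Sum>b<m. \<beta> b * T y b)
    = (\<Sum>a<m. \<Sum>b<m. \<alpha> a * \<beta> b * covariance M (\<lambda>y. T y a) (\<lambda>y. T y b))"
proof -
  interpret finite_measure M by fact
  define E where "E a = integral\<^sup>L M (\<lambda>y. T y a)" for a
  have mean: "integral\<^sup>L M (\<lambda>y. \<Sum>a<m. \<gamma> a * T y a) = (\<Sum>a<m. \<gamma> a * E a)" for \<gamma>
    unfolding E_def using integrable(1) by (simp add: Bochner_Integration.integral_sum)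
  have center: "(\<Sum>a<m. \<gamma> a * T y a) - (\<Sum>a<m. \<gamma> a * E a) = (\<Sum>a<m. \<gamma> a * (T y a - E a))" for \<gamma> y
    by (simp add: sum_subtractf algebra_simps)
  have integrable_c: "integrable M (\<lambda>y. \<alpha> a * \<beta> b * ((T y a - E a) * (T y b - E b)))"
    if "a < m" "b < m" for a b
    using that by (intro integrable_mult_right integrable_centered_product integrable)
      (simp_all add: finite_measure_axioms)
  have "covariance M (\<lambda>y. \<Sum>a<m. \<alpha> a * T y a) (\<lambda>y. \<Sum>b<m. \<beta> b * T y b)
     = (\<integral>y. (\<Sum>a<m. \<Sum>b<m. \<alpha> a * \<beta> b * ((T y a - E a) * (T y b - E b))) \<partial>M)"
    unfolding covariance_def mean center by (simp add: sum_product mult_ac)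
  also have "\<dots> = (\<Sum>a<m. \<Sum>b<m. \<integral>y. \<alpha> a * \<beta> b * ((T y a - E a) * (T y b - E b)) \<partial>M)"
    using integrable_c
    by (subst Bochner_Integration.integral_sum) (auto intro!: integrable_sum sum.cong Bochner_Integration.integral_sum)
  finally show ?thesis
    unfolding covariance_def E_def by simp
qed

lemma covariance_null_space:
  assumes "emeasure M (space M) = 0"
  shows "covariance M X Y = 0"
proof -
  have "AE x in M. False"
    by (rule AE_I'[where N="space M"]) (auto simp: null_sets_def assms)
  then show ?thesis
    unfolding covariance_def by (intro integral_eq_zero_AE) auto
qed

lemma emeasure_space_PiM_null:
  assumes "emeasure M (space M) = 0" "i \<in> I" "finite I"
  shows "emeasure (PiM I (\<lambda>_. M)) (space (PiM I (\<lambda>_. M))) = 0"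
proof -
  interpret finite_measure M by (rule finite_measureI) (simp add: assms)
  interpret product_sigma_finite "\<lambda>_. M" by unfold_locales
  have "emeasure (PiM I (\<lambda>_. M)) (space (PiM I (\<lambda>_. M))) = (\<Prod>i\<in>I. emeasure M (space M))"
    unfolding space_PiM using assms by (intro emeasure_PiM) auto
  then show ?thesis using assms by (auto simp: prod_zero_iff card_gt_0_iff)
qed

lemma emeasure_space_density_null:
  assumes "emeasure M (space M) = 0" "f \<in> borel_measurable M"
  shows "emeasure (density M f) (space (density M f)) = 0"
proof -
  have "AE x in M. False"
    using AE_iff_measurable[of "space M" M "\<lambda>_. False"] assms by auto
  then have "AE x in density M f. False"
    using AE_density[OF assms(2)] by auto
  then show ?thesis
    using AE_iff_measurable[of "space (density M f)" "density M f" "\<lambda>_. False"] by auto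
qed

section \<open>A Frobenius norm bound\<close>

lemma sum_squares_bilinear_le:
  fixes G :: "'a \<Rightarrow> 'u \<Rightarrow> real" and C :: "'a \<Rightarrow> 'a \<Rightarrow> real"
  assumes "finite A" "finite I"
  shows "(\<Sum>u\<in>I. \<Sum>v\<in>I. (\<Sum>a\<in>A. \<Sum>b\<in>A. G a u * G b v * C a b)\<^sup>2)
     \<le> (\<Sum>a\<in>A. \<Sum>u\<in>I. (G a u)\<^sup>2)\<^sup>2 * (\<Sum>a\<in>A. \<Sum>b\<in>A. (C a b)\<^sup>2)"
proof -
  let ?C = "\<Sum>a\<in>A. \<Sum>b\<in>A. (C a b)\<^sup>2"
  have pairs: "(\<Sum>a\<in>A. \<Sum>b\<in>A. F a b) = (\<Sum>z\<in>A \<times> A. F (fst z) (snd z))" for F :: "'a \<Rightarrow> 'a \<Rightarrow> real"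
    by (simp add: sum.cartesian_product case_prod_beta)
  have "(\<Sum>a\<in>A. \<Sum>b\<in>A. G a u * G b v * C a b)\<^sup>2 \<le> ?C * (\<Sum>a\<in>A. \<Sum>b\<in>A. (G a u * G b v)\<^sup>2)" for u v
    unfolding pairs using Cauchy_Schwarz_ineq_sum[of "\<lambda>z. C (fst z) (snd z)" "\<lambda>z. G (fst z) u * G (snd z) v"]
    by (simp add: mult_ac)
  then have "(\<Sum>u\<in>I. \<Sum>v\<in>I. (\<Sum>a\<in>A. \<Sum>b\<in>A. G a u * G b v * C a b)\<^sup>2)
      \<le> ?C * (\<Sum>u\<in>I. \<Sum>v\<in>I. \<Sum>a\<in>A. \<Sum>b\<in>A. (G a u)\<^sup>2 * (G b v)\<^sup>2)"
    by (simp add: sum_distrib_left power_mult_distrib sum_mono)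
  also have "(\<Sum>u\<in>I. \<Sum>v\<in>I. \<Sum>a\<in>A. \<Sum>b\<in>A. (G a u)\<^sup>2 * (G b v)\<^sup>2) = (\<Sum>u\<in>I. \<Sum>a\<in>A. (G a u)\<^sup>2)\<^sup>2"
    by (simp only: power2_eq_square[of "sum _ _"] sum_product)
  also have "(\<Sum>u\<in>I. \<Sum>a\<in>A. (G a u)\<^sup>2) = (\<Sum>a\<in>A. \<Sum>u\<in>I. (G a u)\<^sup>2)"
    by (rule sum.swap)
  finally show ?thesis by (simp add: mult_ac)
qed

lemma frobenius_bilinear_bound:
  fixes H :: "nat \<Rightarrow> 'p \<Rightarrow> 'p \<Rightarrow> real" and C :: "nat \<Rightarrow> nat \<Rightarrow> real" and N :: real
  assumes "finite P" "N > 0"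
  shows "sqrt (\<Sum>p\<in>P. \<Sum>q\<in>P. \<Sum>r\<in>P. \<Sum>s\<in>P. ((1/N) * (\<Sum>a<m. \<Sum>b<m. H a p q * H b r s * C a b))\<^sup>2)
     \<le> (1/N) * (\<Sum>a<m. \<Sum>p\<in>P. \<Sum>q\<in>P. (H a p q)\<^sup>2) * sqrt (\<Sum>a<m. \<Sum>b<m. (C a b)\<^sup>2)"
proof -
  let ?S = "\<Sum>a<m. \<Sum>p\<in>P. \<Sum>q\<in>P. (H a p q)\<^sup>2"
  let ?C = "\<Sum>a<m. \<Sum>b<m. (C a b)\<^sup>2"
  have "(\<Sum>p\<in>P. \<Sum>q\<in>P. \<Sum>r\<in>P. \<Sum>s\<in>P. (\<Sum>a<m. \<Sum>b<m. H a p q * H b r s * C a b)\<^sup>2) \<le> ?S\<^sup>2 * ?C"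
    using sum_squares_bilinear_le[of "{..<m}" "P \<times> P" "\<lambda>a z. H a (fst z) (snd z)" C] assms
    by (simp add: sum.cartesian_product')
  then have "(\<Sum>p\<in>P. \<Sum>q\<in>P. \<Sum>r\<in>P. \<Sum>s\<in>P. ((1/N) * (\<Sum>a<m. \<Sum>b<m. H a p q * H b r s * C a b))\<^sup>2)
      \<le> (1/N)\<^sup>2 * (?S\<^sup>2 * ?C)"
    by (simp only: power_mult_distrib sum_distrib_left[of "(1/N)\<^sup>2", symmetric] mult_left_mono zero_le_power2)
  also have "\<dots> = ((1/N) * ?S * sqrt ?C)\<^sup>2"
  proof -
    have "?C \<ge> 0" by (intro sum_nonneg) auto
    then show ?thesis by (simp add: power_mult_distrib power_divide)
  qed
  finally have "(\<Sum>p\<in>P. \<Sum>q\<in>P. \<Sum>r\<in>P. \<Sum>s\<in>P. ((1/N) * (\<Sum>a<m. \<Sum>b<m. H a p q * H b r s * C a b))\<^sup>2)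
      \<le> ((1/N) * ?S * sqrt ?C)\<^sup>2" .
  moreover have "(1/N) * ?S * sqrt ?C \<ge> 0"
    using assms by (intro mult_nonneg_nonneg sum_nonneg real_sqrt_ge_zero) auto
  ultimately show ?thesis
    by (intro real_le_lsqrt)
qed

section \<open>Integrability near an interior natural parameter\<close>

lemma one_plus_abs_sq_le_exp:
  fixes u e :: real
  assumes e: "e > 0"
  shows "(1 + \<bar>u\<bar>)\<^sup>2 \<le> (2 + 64 / e\<^sup>2) * exp (e * \<bar>u\<bar> / 4)"
proof -
  define w where "w = e * \<bar>u\<bar> / 4"
  have w: "w \<ge> 0" using e by (simp add: w_def)
  have "1 + w + w\<^sup>2 / 2 \<le> exp w" using exp_lower_Taylor_quadratic[OF w] .
  then have w2: "w\<^sup>2 \<le> 2 * exp w" using w by simp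
  have "2 * u\<^sup>2 = 32 * w\<^sup>2 / e\<^sup>2"
    using e by (simp add: w_def power2_eq_square field_simps)
  also have "\<dots> \<le> 64 * exp w / e\<^sup>2"
    using w2 e by (simp add: divide_right_mono)
  finally have "(1 + \<bar>u\<bar>)\<^sup>2 \<le> 2 + 64 * exp w / e\<^sup>2"
    using zero_le_power2[of "\<bar>u\<bar> - 1"] by (simp add: power2_eq_square algebra_simps)
  moreover have "1 \<le> exp w"
    using w by simp
  moreover have "(2 + 64 / e\<^sup>2) * exp w = 2 * exp w + 64 * exp w / e\<^sup>2"
    by (simp add: algebra_simps)
  ultimately show ?thesis
    unfolding w_def by linarith
qed

text \<open>Polynomial weights are absorbed by the slack between the radius \<open>e/4\<close> of \<open>k\<close>
  and the radius \<open>e/2\<close> of the dominating exponentials.\<close>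

lemma exp_mult_one_plus_abs_sq_le:
  fixes u k c e :: real
  assumes e: "e > 0" and k: "\<bar>k - c\<bar> \<le> e / 4"
  shows "exp (u * k) * (1 + \<bar>u\<bar>)\<^sup>2 \<le> (2 + 64 / e\<^sup>2) * (exp (u * (c + e/2)) + exp (u * (c - e/2)))"
proof -
  have "u * k \<le> u * c + \<bar>u\<bar> * (e / 4)"
    using abs_mult[of u "k - c"] abs_ge_self[of "u * (k - c)"] mult_left_mono[OF k, of "\<bar>u\<bar>"]
    by (simp add: algebra_simps)
  then have "u * k + e * \<bar>u\<bar> / 4 \<le> u * c + e * \<bar>u\<bar> / 2"
    by (simp add: algebra_simps)
  also have "exp (u * c + e * \<bar>u\<bar> / 2) \<le> exp (u * (c + e/2)) + exp (u * (c - e/2))"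
    by (cases "u \<ge> 0") (simp_all add: algebra_simps)
  ultimately have "exp (u * k + e * \<bar>u\<bar> / 4) \<le> exp (u * (c + e/2)) + exp (u * (c - e/2))"
    by (meson exp_le_cancel_iff order_trans)
  moreover have "exp (u * k) * (1 + \<bar>u\<bar>)\<^sup>2 \<le> (2 + 64 / e\<^sup>2) * exp (u * k + e * \<bar>u\<bar> / 4)"
    using mult_left_mono[OF one_plus_abs_sq_le_exp[OF e, of u], of "exp (u * k)"]
    by (simp add: exp_add mult_ac)
  ultimately show ?thesis
    using e by (smt (verit) mult_left_mono zero_le_divide_iff zero_le_power2)
qed

lemma mult_le_prod_power2:
  fixes g :: "'a \<Rightarrow> real"
  assumes "finite A" "a \<in> A" "b \<in> A" "\<And>c. c \<in> A \<Longrightarrow> 1 \<le> g c"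
  shows "g a * g b \<le> (\<Prod>c\<in>A. (g c)\<^sup>2)"
proof -
  have factor: "(g c)\<^sup>2 \<le> (\<Prod>c\<in>A. (g c)\<^sup>2)" if "c \<in> A" for c
  proof -
    have "1 \<le> (\<Prod>c\<in>A - {c}. (g c)\<^sup>2)"
      using assms by (intro prod_ge_1 one_le_power) auto
    then have "(g c)\<^sup>2 * 1 \<le> (g c)\<^sup>2 * (\<Prod>c\<in>A - {c}. (g c)\<^sup>2)"
      by (intro mult_left_mono) auto
    then show ?thesis
      by (simp add: prod.remove[OF assms(1) that])
  qed
  have "1 \<le> g a" "1 \<le> g b"
    using assms by auto
  show ?thesis
  proof (cases "g a \<le> g b")
    case True
    then have "g a * g b \<le> (g b)\<^sup>2"
      using mult_right_mono[OF True, of "g b"] \<open>1 \<le> g b\<close> by (simp add: power2_eq_square)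
    with factor[OF assms(3)] show ?thesis by linarith
  next
    case False
    then have "g a * g b \<le> (g a)\<^sup>2"
      using mult_left_mono[of "g b" "g a" "g a"] \<open>1 \<le> g a\<close> by (simp add: power2_eq_square)
    with factor[OF assms(2)] show ?thesis by linarith
  qed
qed

locale exp_family_box =
  fixes \<nu> :: "'y measure" and t :: "'y \<Rightarrow> nat \<Rightarrow> real" and m :: nat and h0 :: "nat \<Rightarrow> real" and \<epsilon> :: real
  assumes measurable_t: "\<And>a. a < m \<Longrightarrow> (\<lambda>y. t y a) \<in> borel_measurable \<nu>"
    and eps_pos: "\<epsilon> > 0"
    and finite_exp: "\<And>h. (\<forall>a<m. \<bar>h a - h0 a\<bar> < \<epsilon>) \<Longrightarrow>
      (\<integral>\<^sup>+y. ennreal (exp (\<Sum>a<m. t y a * h a)) \<partial>\<nu>) < \<infinity>"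
begin

lemma measurable_linear: "(\<lambda>y. \<Sum>a<m. t y a * h a) \<in> borel_measurable \<nu>"
  using measurable_t by (intro borel_measurable_sum borel_measurable_times) auto

lemma measurable_exp_linear: "(\<lambda>y. exp (\<Sum>a<m. t y a * h a)) \<in> borel_measurable \<nu>"
  using measurable_compose[OF measurable_linear borel_measurable_exp] by simp

lemma integrable_exp_linear:
  "(\<forall>a<m. \<bar>h a - h0 a\<bar> < \<epsilon>) \<Longrightarrow> integrable \<nu> (\<lambda>y. exp (\<Sum>a<m. t y a * h a))"
  by (rule integrableI_bounded) (use measurable_exp_linear finite_exp in auto)

lemma emeasure_space_model_dist_null:
  assumes "emeasure \<nu> (space \<nu>) = 0"
  shows "emeasure (model_dist \<nu> t m h0) (space (model_dist \<nu> t m h0)) = 0"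
proof -
  have "(\<lambda>y. ennreal (exp ((\<Sum>a<m. t y a * h0 a) - log_partition \<nu> t m h0))) \<in> borel_measurable \<nu>"
    using measurable_linear[of h0] by measurable
  then show ?thesis
    unfolding model_dist_def by (rule emeasure_space_density_null[OF assms])
qed

definition box_dominant :: "'y \<Rightarrow> real" where
  "box_dominant y = (\<Prod>a<m. exp (t y a * (h0 a + \<epsilon>/2)) + exp (t y a * (h0 a - \<epsilon>/2)))"

abbreviation box_const :: real where
  "box_const \<equiv> (2 + 64 / \<epsilon>\<^sup>2) ^ m"

text \<open>The corners of the box of radius \<open>\<epsilon>/2\<close> around \<open>h0\<close> are natural parameters,
  which makes \<open>box_dominant\<close> integrable.\<close>

lemma box_dominant_eq_sum_corners:
  "box_dominant y = (\<Sum>B\<in>Pow {..<m}. exp (\<Sum>a<m. t y a * (if a \<in> B then h0 a + \<epsilon>/2 else h0 a - \<epsilon>/2)))"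
proof -
  have "exp (\<Sum>a<m. t y a * (if a \<in> B then h0 a + \<epsilon>/2 else h0 a - \<epsilon>/2))
      = (\<Prod>a\<in>B. exp (t y a * (h0 a + \<epsilon>/2))) * (\<Prod>a\<in>{..<m} - B. exp (t y a * (h0 a - \<epsilon>/2)))"
    if "B \<subseteq> {..<m}" for B
  proof -
    have "exp (\<Sum>a<m. t y a * (if a \<in> B then h0 a + \<epsilon>/2 else h0 a - \<epsilon>/2))
        = (\<Prod>a<m. if a \<in> B then exp (t y a * (h0 a + \<epsilon>/2)) else exp (t y a * (h0 a - \<epsilon>/2)))"
      by (simp add: exp_sum if_distrib)
    also have "\<dots> = (\<Prod>a\<in>{..<m} \<inter> {a. a \<in> B}. exp (t y a * (h0 a + \<epsilon>/2)))
        * (\<Prod>a\<in>{..<m} \<inter> - {a. a \<in> B}. exp (t y a * (h0 a - \<epsilon>/2)))"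
      by (rule prod.If_cases) simp
    also have "{..<m} \<inter> {a. a \<in> B} = B"
      using that by auto
    also have "{..<m} \<inter> - {a. a \<in> B} = {..<m} - B"
      by auto
    finally show ?thesis .
  qed
  then show ?thesis
    unfolding box_dominant_def prod_add[OF finite_lessThan] by (auto intro: sum.cong)
qed

lemma integrable_box_dominant: "integrable \<nu> (\<lambda>y. c * box_dominant y)"
  unfolding box_dominant_eq_sum_corners
  by (intro integrable_mult_right Bochner_Integration.integrable_sum integrable_exp_linear)
    (use eps_pos in auto)

lemma box_dominant_nonneg: "0 \<le> box_dominant y"
  unfolding box_dominant_def by (intro prod_nonneg) (auto intro: add_nonneg_nonneg)

lemma exp_linear_mult_le_box_dominant:
  assumes h: "\<forall>c<m. \<bar>h c - h0 c\<bar> \<le> \<epsilon>/4" and "a < m" "b < m"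
  shows "exp (\<Sum>c<m. t y c * h c) * ((1 + \<bar>t y a\<bar>) * (1 + \<bar>t y b\<bar>)) \<le> box_const * box_dominant y"
proof -
  have "exp (\<Sum>c<m. t y c * h c) * ((1 + \<bar>t y a\<bar>) * (1 + \<bar>t y b\<bar>))
      \<le> exp (\<Sum>c<m. t y c * h c) * (\<Prod>c<m. (1 + \<bar>t y c\<bar>)\<^sup>2)"
    using assms by (intro mult_left_mono mult_le_prod_power2) auto
  also have "\<dots> = (\<Prod>c<m. exp (t y c * h c) * (1 + \<bar>t y c\<bar>)\<^sup>2)"
    by (simp add: exp_sum prod.distrib)
  also have "\<dots> \<le> (\<Prod>c<m. (2 + 64 / \<epsilon>\<^sup>2) * (exp (t y c * (h0 c + \<epsilon>/2)) + exp (t y c * (h0 c - \<epsilon>/2))))"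
    using h by (intro prod_mono conjI mult_nonneg_nonneg exp_mult_one_plus_abs_sq_le eps_pos) auto
  also have "\<dots> = box_const * box_dominant y"
    by (simp add: prod.distrib box_dominant_def)
  finally show ?thesis .
qed

lemma integrable_exp_linear_weighted:
  assumes h: "\<forall>c<m. \<bar>h c - h0 c\<bar> \<le> \<epsilon>/4" and ab: "a < m" "b < m"
    and w: "w \<in> borel_measurable \<nu>" "\<And>y. \<bar>w y\<bar> \<le> (1 + \<bar>t y a\<bar>) * (1 + \<bar>t y b\<bar>)"
  shows "integrable \<nu> (\<lambda>y. exp (\<Sum>c<m. t y c * h c) * w y)"
proof (rule Bochner_Integration.integrable_bound[OF integrable_box_dominant[of box_const]])
  show "(\<lambda>y. exp (\<Sum>c<m. t y c * h c) * w y) \<in> borel_measurable \<nu>"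
    using measurable_exp_linear w(1) by measurable
  have "\<bar>exp (\<Sum>c<m. t y c * h c) * w y\<bar> \<le> exp (\<Sum>c<m. t y c * h c) * ((1 + \<bar>t y a\<bar>) * (1 + \<bar>t y b\<bar>))" for y
    using w(2) by (simp add: abs_mult mult_left_mono)
  with exp_linear_mult_le_box_dominant[OF h ab] box_dominant_nonneg eps_pos
  show "AE y in \<nu>. norm (exp (\<Sum>c<m. t y c * h c) * w y) \<le> norm (box_const * box_dominant y)"
    by (intro AE_I2) (smt (verit) real_norm_def zero_le_power zero_le_divide_iff zero_le_power2 mult_nonneg_nonneg)
qed

lemma exp_curve_deriv_le_box_dominant:
  assumes h: "\<forall>a<m. \<bar>h a - h0 a\<bar> \<le> \<epsilon>/4" and h': "\<forall>a<m. \<bar>h' a\<bar> \<le> M"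
    and w: "\<bar>w\<bar> \<le> 1 + \<bar>t y b\<bar>" and b: "b < m"
  shows "\<bar>exp (\<Sum>a<m. t y a * h a) * w * (\<Sum>a<m. t y a * h' a)\<bar> \<le> (real m * M * box_const) * box_dominant y"
proof -
  let ?E = "exp (\<Sum>a<m. t y a * h a)"
  have M: "0 \<le> M" using h' b by (meson abs_ge_zero order_trans)
  have "\<bar>\<Sum>a<m. t y a * h' a\<bar> \<le> (\<Sum>a<m. (1 + \<bar>t y a\<bar>) * M)"
    using h' M by (intro order_trans[OF sum_abs] sum_mono) (auto simp: abs_mult intro: mult_mono)
  then have "\<bar>?E * w * (\<Sum>a<m. t y a * h' a)\<bar> \<le> ?E * (1 + \<bar>t y b\<bar>) * (\<Sum>a<m. (1 + \<bar>t y a\<bar>) * M)"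
    using w M unfolding abs_mult by (intro mult_mono) (auto intro: sum_nonneg)
  also have "\<dots> = M * (\<Sum>a<m. ?E * ((1 + \<bar>t y a\<bar>) * (1 + \<bar>t y b\<bar>)))"
    by (simp add: sum_distrib_left sum_distrib_right ac_simps)
  also have "\<dots> \<le> M * (\<Sum>a<m. box_const * box_dominant y)"
    using h b M by (intro mult_left_mono sum_mono exp_linear_mult_le_box_dominant) auto
  finally show ?thesis by (simp add: mult_ac)
qed

lemma DERIV_integral_exp_curve:
  fixes c c' :: "real \<Rightarrow> nat \<Rightarrow> real" and w :: "'y \<Rightarrow> real"
  assumes r: "r > 0"
    and box: "\<And>v a. v \<in> ball v0 r \<Longrightarrow> a < m \<Longrightarrow> \<bar>c v a - h0 a\<bar> \<le> \<epsilon>/4"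
    and deriv: "\<And>v a. v \<in> ball v0 r \<Longrightarrow> a < m \<Longrightarrow> ((\<lambda>u. c u a) has_real_derivative c' v a) (at v)"
    and velocity: "\<And>v a. v \<in> ball v0 r \<Longrightarrow> a < m \<Longrightarrow> \<bar>c' v a\<bar> \<le> M"
    and w: "w \<in> borel_measurable \<nu>" "\<And>y. \<bar>w y\<bar> \<le> 1 + \<bar>t y b\<bar>" and b: "b < m"
  shows "((\<lambda>v. \<integral>y. exp (\<Sum>a<m. t y a * c v a) * w y \<partial>\<nu>) has_real_derivative
          (\<integral>y. exp (\<Sum>a<m. t y a * c v0 a) * w y * (\<Sum>a<m. t y a * c' v0 a) \<partial>\<nu>)) (at v0)"
proof (rule DERIV_integral_dominated[OF r])
  show "((\<lambda>u. exp (\<Sum>a<m. t y a * c u a) * w y) has_real_derivative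
        exp (\<Sum>a<m. t y a * c v a) * w y * (\<Sum>a<m. t y a * c' v a)) (at v)"
    if v: "v \<in> ball v0 r" for v y
  proof -
    have "((\<lambda>u. \<Sum>a<m. t y a * c u a) has_real_derivative (\<Sum>a<m. t y a * c' v a)) (at v)"
      by (intro DERIV_sum DERIV_cmult deriv[OF v]) simp
    from DERIV_cmult_right[OF DERIV_chain2[OF DERIV_exp this], of "w y"]
    show ?thesis by (simp add: ac_simps)
  qed
  have "\<bar>w y\<bar> \<le> (1 + \<bar>t y b\<bar>) * (1 + \<bar>t y b\<bar>)" for y
    using w(2)[of y] by (smt (verit) abs_ge_zero mult_le_cancel_left1)
  then show "integrable \<nu> (\<lambda>y. exp (\<Sum>a<m. t y a * c v a) * w y)" if "v \<in> ball v0 r" for v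
    using box[OF that] by (intro integrable_exp_linear_weighted[OF _ b b w(1)]) auto
  show "(\<lambda>y. exp (\<Sum>a<m. t y a * c v0 a) * w y * (\<Sum>a<m. t y a * c' v0 a)) \<in> borel_measurable \<nu>"
    using measurable_exp_linear measurable_linear w(1) by measurable
  show "\<bar>exp (\<Sum>a<m. t y a * c v a) * w y * (\<Sum>a<m. t y a * c' v a)\<bar>
      \<le> (real m * M * box_const) * box_dominant y" if "v \<in> ball v0 r" for v y
    using box[OF that] velocity[OF that] w(2) b by (intro exp_curve_deriv_le_box_dominant) auto
qed (rule integrable_box_dominant)

end

section \<open>The log-partition function along the network\<close>

locale network_exp_family = exp_family_box \<nu> t "n L" "net_out \<sigma> L n \<theta> x" \<epsilon>
  for \<sigma> :: "real \<Rightarrow> real" and L :: nat and n :: "nat \<Rightarrow> nat" and x :: "nat \<Rightarrow> real"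
    and \<nu> :: "'y measure" and t :: "'y \<Rightarrow> nat \<Rightarrow> real" and \<theta> :: params and \<epsilon> :: real +
  assumes C2: "C2 \<sigma>"
    and space_nonnull: "emeasure \<nu> (space \<nu>) \<noteq> 0"
    and outputs_nonempty: "n L \<ge> 1"
begin

abbreviation out :: "params \<Rightarrow> nat \<Rightarrow> real" where
  "out W a \<equiv> net_out \<sigma> L n W x a"

abbreviation dout :: "nat \<times> nat \<times> nat \<Rightarrow> nat \<Rightarrow> params \<Rightarrow> real" where
  "dout r a \<equiv> partial r (\<lambda>W. out W a)"

definition near :: "params \<Rightarrow> bool" where
  "near W \<longleftrightarrow> (\<forall>a<n L. \<bar>out W a - out \<theta> a\<bar> < \<epsilon>/4)"

definition Z :: "params \<Rightarrow> real" where
  "Z W = (\<integral>y. exp (\<Sum>a<n L. t y a * out W a) \<partial>\<nu>)"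

definition Z_moment :: "nat \<Rightarrow> params \<Rightarrow> real" where
  "Z_moment b W = (\<integral>y. exp (\<Sum>a<n L. t y a * out W a) * t y b \<partial>\<nu>)"

definition Z_partial :: "nat \<times> nat \<times> nat \<Rightarrow> params \<Rightarrow> real" where
  "Z_partial r W = (\<Sum>a<n L. dout r a W * Z_moment a W)"

definition log_partition_partial :: "nat \<times> nat \<times> nat \<Rightarrow> params \<Rightarrow> real" where
  "log_partition_partial r W = Z_partial r W / Z W"

lemma coord_differentiable2_out: "coord_differentiable2 (\<lambda>W. out W a)"
  by (rule coord_differentiable2_net_out[OF C2])

lemma near_theta: "near \<theta>"
  unfolding near_def using eps_pos by simp

lemma near_fun_upd_ball:
  assumes "near W"
  shows "\<exists>\<rho>>0. \<exists>M. \<forall>v\<in>ball (W r) \<rho>. near (W(r := v)) \<and> (\<forall>a<n L. \<bar>dout r a (W(r := v))\<bar> \<le> M)"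
proof -
  define M where "M = (\<Sum>a<n L. \<bar>dout r a W\<bar>) + 1"
  define P where "P v a \<longleftrightarrow> \<bar>out (W(r := v)) a - out W a\<bar> < \<epsilon>/4 - \<bar>out W a - out \<theta> a\<bar> \<and>
      \<bar>dout r a (W(r := v)) - dout r a W\<bar> < 1" for v a
  have "eventually (\<lambda>v. P v a) (at (W r))" if a: "a < n L" for a
  proof -
    have "((\<lambda>v. out (W(r := v)) a) \<longlongrightarrow> out W a) (at (W r))"
      "((\<lambda>v. dout r a (W(r := v))) \<longlongrightarrow> dout r a W) (at (W r))"
      using DERIV_fun_upd_partial[THEN DERIV_isCont, unfolded isCont_def, of _ W r "W r"]
        coord_differentiable2_out coord_differentiable2_imp_coord_differentiable
        coord_differentiable2_imp_partial
      by auto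
    note close = this[unfolded tendsto_iff, rule_format]
    have "\<epsilon>/4 - \<bar>out W a - out \<theta> a\<bar> > 0"
      using assms a unfolding near_def by auto
    from close(1)[OF this] close(2)[of 1] show ?thesis
      unfolding P_def by (auto simp: dist_real_def elim: eventually_elim2)
  qed
  then have "eventually (\<lambda>v. \<forall>a\<in>{..<n L}. P v a) (at (W r))"
    by (intro eventually_ball_finite) auto
  then obtain \<rho> where \<rho>: "\<rho> > 0" "\<And>v. v \<noteq> W r \<Longrightarrow> dist v (W r) < \<rho> \<Longrightarrow> \<forall>a\<in>{..<n L}. P v a"
    unfolding eventually_at by auto
  have P: "P v a" if "v \<in> ball (W r) \<rho>" "a < n L" for v a
    using \<rho> that assms eps_pos unfolding P_def near_def
    by (cases "v = W r") (auto simp: dist_commute)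
  have "\<bar>dout r a W\<bar> \<le> (\<Sum>a<n L. \<bar>dout r a W\<bar>)" if "a < n L" for a
    using that by (intro member_le_sum) auto
  then have "near (W(r := v)) \<and> (\<forall>a<n L. \<bar>dout r a (W(r := v))\<bar> \<le> M)" if "v \<in> ball (W r) \<rho>" for v
    using P[OF that] unfolding near_def P_def M_def by (smt (verit))
  with \<rho>(1) show ?thesis by blast
qed

lemma DERIV_integral_exp_out:
  assumes W: "near W" and w: "w \<in> borel_measurable \<nu>" "\<And>y. \<bar>w y\<bar> \<le> 1 + \<bar>t y b\<bar>" and b: "b < n L"
  shows "((\<lambda>v. \<integral>y. exp (\<Sum>a<n L. t y a * out (W(r := v)) a) * w y \<partial>\<nu>) has_real_derivative
          (\<integral>y. exp (\<Sum>a<n L. t y a * out W a) * w y * (\<Sum>a<n L. t y a * dout r a W) \<partial>\<nu>)) (at (W r))"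
proof -
  obtain \<rho> M where \<rho>: "\<rho> > 0"
    and ball: "\<And>v. v \<in> ball (W r) \<rho> \<Longrightarrow> near (W(r := v)) \<and> (\<forall>a<n L. \<bar>dout r a (W(r := v))\<bar> \<le> M)"
    using near_fun_upd_ball[OF W, of r] by blast
  have "((\<lambda>v. \<integral>y. exp (\<Sum>a<n L. t y a * out (W(r := v)) a) * w y \<partial>\<nu>) has_real_derivative
      (\<integral>y. exp (\<Sum>a<n L. t y a * out (W(r := W r)) a) * w y * (\<Sum>a<n L. t y a * dout r a (W(r := W r))) \<partial>\<nu>))
      (at (W r))"
  proof (rule DERIV_integral_exp_curve[OF \<rho>, where M=M])
    show "\<bar>out (W(r := v)) a - out \<theta> a\<bar> \<le> \<epsilon>/4" if "v \<in> ball (W r) \<rho>" "a < n L" for v a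
      using ball[OF that(1)] that(2) unfolding near_def by force
    show "((\<lambda>u. out (W(r := u)) a) has_real_derivative dout r a (W(r := v))) (at v)" for v a
      by (intro DERIV_fun_upd_partial coord_differentiable2_imp_coord_differentiable coord_differentiable2_out)
    show "\<bar>dout r a (W(r := v))\<bar> \<le> M" if "v \<in> ball (W r) \<rho>" "a < n L" for v a
      using ball[OF that(1)] that(2) by blast
  qed (use w b in auto)
  then show ?thesis by simp
qed

lemma integrable_exp_out:
  assumes "near W" "a < n L" "b < n L"
    and "w \<in> borel_measurable \<nu>" "\<And>y. \<bar>w y\<bar> \<le> (1 + \<bar>t y a\<bar>) * (1 + \<bar>t y b\<bar>)"
  shows "integrable \<nu> (\<lambda>y. exp (\<Sum>c<n L. t y c * out W c) * w y)"
  using assms(1) by (intro integrable_exp_linear_weighted[OF _ assms(2-5)]) (auto simp: near_def)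

lemma integrable_exp_out_t:
  assumes "near W" "a < n L"
  shows "integrable \<nu> (\<lambda>y. exp (\<Sum>c<n L. t y c * out W c) * t y a)"
  using assms measurable_t by (intro integrable_exp_out[of W a a]) (auto simp: algebra_simps)

lemma DERIV_Z:
  assumes W: "near W"
  shows "((\<lambda>v. Z (W(r := v))) has_real_derivative Z_partial r W) (at (W r))"
proof -
  have "((\<lambda>v. \<integral>y. exp (\<Sum>a<n L. t y a * out (W(r := v)) a) * 1 \<partial>\<nu>) has_real_derivative
      (\<integral>y. exp (\<Sum>a<n L. t y a * out W a) * 1 * (\<Sum>a<n L. t y a * dout r a W) \<partial>\<nu>)) (at (W r))"
    using outputs_nonempty by (intro DERIV_integral_exp_out[OF W, where b=0]) auto
  moreover have "(\<integral>y. exp (\<Sum>a<n L. t y a * out W a) * 1 * (\<Sum>a<n L. t y a * dout r a W) \<partial>\<nu>)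
      = (\<integral>y. (\<Sum>a<n L. dout r a W * (exp (\<Sum>c<n L. t y c * out W c) * t y a)) \<partial>\<nu>)"
    by (simp add: sum_distrib_left ac_simps)
  moreover have "\<dots> = Z_partial r W"
    unfolding Z_partial_def Z_moment_def using integrable_exp_out_t[OF W]
    by (simp add: Bochner_Integration.integral_sum)
  ultimately show ?thesis
    unfolding Z_def by simp
qed

lemma Z_moment_differentiable:
  assumes "near W" "b < n L"
  shows "\<exists>d. ((\<lambda>v. Z_moment b (W(r := v))) has_real_derivative d) (at (W r))"
  unfolding Z_moment_def using DERIV_integral_exp_out[OF assms(1) measurable_t[OF assms(2)] _ assms(2), of r]
  by auto

lemma Z_pos:
  assumes "near W"
  shows "Z W > 0"
proof -
  have integrable: "integrable \<nu> (\<lambda>y. exp (\<Sum>a<n L. t y a * out W a))"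
    using assms eps_pos by (intro integrable_exp_linear) (auto simp: near_def)
  have "Z W \<noteq> 0"
  proof
    assume "Z W = 0"
    then have "AE y in \<nu>. exp (\<Sum>a<n L. t y a * out W a) = 0"
      using integral_nonneg_eq_0_iff_AE[OF integrable] unfolding Z_def by auto
    then have "AE y in \<nu>. False"
      by simp
    with space_nonnull show False
      using ae_filter_eq_bot_iff[of \<nu>] trivial_limit_def by metis
  qed
  moreover have "Z W \<ge> 0"
    unfolding Z_def by (intro integral_nonneg_AE) auto
  ultimately show ?thesis by simp
qed

lemma has_partial_deriv_log_partition:
  assumes W: "near W"
  shows "has_partial_deriv (\<lambda>W. log_partition \<nu> t (n L) (net_out \<sigma> L n W x)) r W (log_partition_partial r W)"
proof -
  have log_Z: "log_partition \<nu> t (n L) (net_out \<sigma> L n W' x) = ln (Z W')" for W'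
    unfolding log_partition_def Z_def ..
  have "(ln has_real_derivative 1 / Z (W(r := W r))) (at (Z (W(r := W r))))"
    using DERIV_ln_divide[OF Z_pos[OF W]] by simp
  from DERIV_chain2[OF this DERIV_Z[OF W, of r]] show ?thesis
    unfolding has_partial_deriv_def log_partition_partial_def log_Z by (simp add: field_simps)
qed

lemma log_partition_partial_differentiable:
  "\<exists>k. ((\<lambda>v. log_partition_partial q (\<theta>(p := v))) has_real_derivative k) (at (\<theta> p))"
proof -
  have "\<forall>b. \<exists>d. b < n L \<longrightarrow> ((\<lambda>v. Z_moment b (\<theta>(p := v))) has_real_derivative d) (at (\<theta> p))"
    using Z_moment_differentiable[OF near_theta] by blast
  then obtain dZ_moment where dZ_moment:
    "\<And>b. b < n L \<Longrightarrow> ((\<lambda>v. Z_moment b (\<theta>(p := v))) has_real_derivative dZ_moment b) (at (\<theta> p))"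
    by metis
  have dout: "((\<lambda>v. dout q a (\<theta>(p := v))) has_real_derivative partial p (dout q a) (\<theta>(p := \<theta> p))) (at (\<theta> p))"
    for a by (intro DERIV_fun_upd_partial coord_differentiable2_imp_partial coord_differentiable2_out)
  have Z_partial: "((\<lambda>v. Z_partial q (\<theta>(p := v))) has_real_derivative
      (\<Sum>a<n L. partial p (dout q a) (\<theta>(p := \<theta> p)) * Z_moment a (\<theta>(p := \<theta> p))
        + dZ_moment a * dout q a (\<theta>(p := \<theta> p)))) (at (\<theta> p))"
    unfolding Z_partial_def by (intro DERIV_sum DERIV_mult dout dZ_moment) simp
  have "Z (\<theta>(p := \<theta> p)) \<noteq> 0"
    using Z_pos[OF near_theta] by simp
  from DERIV_divide[OF Z_partial DERIV_Z[OF near_theta] this] show ?thesis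
    unfolding log_partition_partial_def by blast
qed

section \<open>The Hessian of the log-likelihood and its estimator\<close>

definition hess_out :: "nat \<Rightarrow> nat \<times> nat \<times> nat \<Rightarrow> nat \<times> nat \<times> nat \<Rightarrow> real" where
  "hess_out a p q = partial2 p q (\<lambda>W. out W a) \<theta>"

definition hess_log_partition :: "nat \<times> nat \<times> nat \<Rightarrow> nat \<times> nat \<times> nat \<Rightarrow> real" where
  "hess_log_partition p q = deriv (\<lambda>v. log_partition_partial q (\<theta>(p := v))) (\<theta> p)"

abbreviation model :: "'y measure" where
  "model \<equiv> model_dist \<nu> t (n L) (net_out \<sigma> L n \<theta> x)"

lemma partial_loglik:
  assumes "near W"
  shows "partial q (loglik \<sigma> L n x \<nu> t y) W = (\<Sum>a<n L. t y a * dout q a W) - log_partition_partial q W"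
proof (rule partial_eqI)
  have "has_partial_deriv (\<lambda>W. \<Sum>a<n L. t y a * out W a) q W (\<Sum>a<n L. t y a * dout q a W)"
    by (intro has_partial_deriv_linear_combination coord_differentiable2_imp_coord_differentiable
        coord_differentiable2_out) simp
  from DERIV_diff[OF this[unfolded has_partial_deriv_def]
      has_partial_deriv_log_partition[OF assms, of q, unfolded has_partial_deriv_def]]
  show "has_partial_deriv (loglik \<sigma> L n x \<nu> t y) q W ((\<Sum>a<n L. t y a * dout q a W) - log_partition_partial q W)"
    unfolding has_partial_deriv_def loglik_def .
qed

lemma partial2_loglik:
  "partial2 p q (loglik \<sigma> L n x \<nu> t y) \<theta> = (\<Sum>a<n L. t y a * hess_out a p q) - hess_log_partition p q"
proof -
  obtain \<rho> where \<rho>: "\<rho> > 0" and near: "\<And>v. v \<in> ball (\<theta> p) \<rho> \<Longrightarrow> near (\<theta>(p := v))"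
    using near_fun_upd_ball[OF near_theta, of p] by blast
  obtain k where k: "((\<lambda>v. log_partition_partial q (\<theta>(p := v))) has_real_derivative k) (at (\<theta> p))"
    using log_partition_partial_differentiable by blast
  have "has_partial_deriv (\<lambda>W. \<Sum>a<n L. t y a * dout q a W) p \<theta> (\<Sum>a<n L. t y a * hess_out a p q)"
    unfolding hess_out_def partial2_def
    by (intro has_partial_deriv_linear_combination coord_differentiable2_imp_partial
        coord_differentiable2_out) simp
  from DERIV_diff[OF this[unfolded has_partial_deriv_def] k]
  have "((\<lambda>v. partial q (loglik \<sigma> L n x \<nu> t y) (\<theta>(p := v))) has_real_derivative
      (\<Sum>a<n L. t y a * hess_out a p q) - k) (at (\<theta> p))"
  proof (rule has_field_derivative_transform_within_open[OF _ open_ball])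
    show "(\<Sum>a<n L. t y a * dout q a (\<theta>(p := v))) - log_partition_partial q (\<theta>(p := v))
        = partial q (loglik \<sigma> L n x \<nu> t y) (\<theta>(p := v))" if "v \<in> ball (\<theta> p) \<rho>" for v
      using partial_loglik[OF near[OF that]] by simp
  qed (use \<rho> in simp)
  then show ?thesis
    unfolding partial2_def partial_def[of p] hess_log_partition_def DERIV_imp_deriv[OF k]
    by (simp add: DERIV_imp_deriv)
qed

lemma model_eq_density:
  "model = density \<nu> (\<lambda>y. exp (\<Sum>a<n L. t y a * out \<theta> a) / Z \<theta>)"
proof -
  have "log_partition \<nu> t (n L) (net_out \<sigma> L n \<theta> x) = ln (Z \<theta>)"
    unfolding log_partition_def Z_def ..
  then have "exp ((\<Sum>a<n L. t y a * out \<theta> a) - log_partition \<nu> t (n L) (net_out \<sigma> L n \<theta> x))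
      = exp (\<Sum>a<n L. t y a * out \<theta> a) / Z \<theta>" for y
    using Z_pos[OF near_theta] by (simp add: exp_diff)
  then show ?thesis
    unfolding model_dist_def by simp
qed

lemma prob_space_model: "prob_space model"
proof (rule prob_spaceI)
  have integrable: "integrable \<nu> (\<lambda>y. exp (\<Sum>a<n L. t y a * out \<theta> a) / Z \<theta>)"
    using eps_pos by (intro integrable_divide integrable_exp_linear) auto
  have "emeasure model (space model) = (\<integral>\<^sup>+ y. exp (\<Sum>a<n L. t y a * out \<theta> a) / Z \<theta> \<partial>\<nu>)"
    unfolding model_eq_density using integrable
    by (subst emeasure_density) (auto intro!: nn_integral_cong simp: indicator_def)
  also have "\<dots> = ennreal (Z \<theta> / Z \<theta>)"
    using integrable Z_pos[OF near_theta] unfolding Z_def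
    by (subst nn_integral_eq_integral) auto
  finally show "emeasure model (space model) = 1"
    using Z_pos[OF near_theta] by simp
qed

lemma integrable_model:
  assumes "f \<in> borel_measurable \<nu>" "a < n L" "b < n L"
    and "\<And>y. \<bar>f y\<bar> \<le> (1 + \<bar>t y a\<bar>) * (1 + \<bar>t y b\<bar>)"
  shows "integrable model f"
proof -
  have "integrable \<nu> (\<lambda>y. exp (\<Sum>c<n L. t y c * out \<theta> c) * f y)"
    using assms by (intro integrable_exp_out[OF near_theta])
  then have "integrable \<nu> (\<lambda>y. (exp (\<Sum>c<n L. t y c * out \<theta> c) / Z \<theta>) *\<^sub>R f y)"
    by simp
  then show ?thesis
    unfolding model_eq_density using Z_pos[OF near_theta] assms(1) measurable_exp_linear
    by (subst integrable_density) auto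
qed

lemma integrable_model_t: "a < n L \<Longrightarrow> integrable model (\<lambda>y. t y a)"
  using measurable_t by (intro integrable_model[of _ a a]) (auto simp: algebra_simps)

lemma integrable_model_tt: "a < n L \<Longrightarrow> b < n L \<Longrightarrow> integrable model (\<lambda>y. t y a * t y b)"
  using measurable_t by (intro integrable_model[of _ a b]) (auto simp: abs_mult intro: mult_mono)

lemma I2hat_eq_sum_iid:
  assumes "N \<ge> 1"
  shows "I2hat \<sigma> L n x \<nu> t N \<theta> p q
    = (\<lambda>ys. hess_log_partition p q + (\<Sum>i<N. \<Sum>a<n L. (- hess_out a p q / real N) * t (ys i) a))"
proof
  fix ys :: "nat \<Rightarrow> 'y"
  have "I2hat \<sigma> L n x \<nu> t N \<theta> p q ys
      = (1 / real N) * (real N * hess_log_partition p q) - (\<Sum>i<N. (\<Sum>a<n L. t (ys i) a * hess_out a p q) / real N)"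
    unfolding I2hat_def partial2_loglik
    by (simp add: sum_subtractf sum_divide_distrib right_diff_distrib)
  also have "\<dots> = hess_log_partition p q + (\<Sum>i<N. \<Sum>a<n L. (- hess_out a p q / real N) * t (ys i) a)"
    using assms by (simp add: sum_negf sum_divide_distrib[symmetric] sum_distrib_left mult_ac)
  finally show "I2hat \<sigma> L n x \<nu> t N \<theta> p q ys
      = hess_log_partition p q + (\<Sum>i<N. \<Sum>a<n L. (- hess_out a p q / real N) * t (ys i) a)" .
qed

lemma covariance_I2hat:
  assumes "N \<ge> 1"
  shows "covariance (sample_law \<sigma> L n x \<nu> t N \<theta>) (I2hat \<sigma> L n x \<nu> t N \<theta> p q) (I2hat \<sigma> L n x \<nu> t N \<theta> r s)
    = (1 / real N) * (\<Sum>a<n L. \<Sum>b<n L. hess_out a p q * hess_out b r s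
        * covariance model (\<lambda>y. t y a) (\<lambda>y. t y b))"
proof -
  let ?f = "\<lambda>p q y. \<Sum>a<n L. (- hess_out a p q / real N) * t y a"
  have integrable_f: "integrable model (?f p q)" for p q
    by (intro Bochner_Integration.integrable_sum integrable_mult_right integrable_model_t) simp
  have "(\<lambda>y. ?f p q y * ?f r s y)
      = (\<lambda>y. \<Sum>a<n L. \<Sum>b<n L. ((- hess_out a p q / real N) * (- hess_out b r s / real N)) * (t y a * t y b))"
    by (simp add: sum_product mult_ac)
  then have integrable_ff: "integrable model (\<lambda>y. ?f p q y * ?f r s y)"
    by (simp only:) (intro Bochner_Integration.integrable_sum integrable_mult_right integrable_model_tt; simp)
  have "covariance (sample_law \<sigma> L n x \<nu> t N \<theta>) (I2hat \<sigma> L n x \<nu> t N \<theta> p q) (I2hat \<sigma> L n x \<nu> t N \<theta> r s)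
      = real N * covariance model (?f p q) (?f r s)"
    unfolding I2hat_eq_sum_iid[OF assms] sample_law_def
    by (rule covariance_sum_iid[OF prob_space_model integrable_f integrable_f integrable_ff])
  also have "covariance model (?f p q) (?f r s) = (\<Sum>a<n L. \<Sum>b<n L.
      (- hess_out a p q / real N) * (- hess_out b r s / real N) * covariance model (\<lambda>y. t y a) (\<lambda>y. t y b))"
    using prob_space_model integrable_model_t integrable_model_tt
    by (intro covariance_linear) (auto simp: prob_space_def)
  finally show ?thesis
    using assms by (simp add: sum_distrib_left field_simps power2_eq_square)
qed

end

lemma finite_param_index: "finite (param_index L n)"
proof -
  have "param_index L n = (SIGMA l:{..<L}. {..<n (Suc l)} \<times> {..n l})"
    unfolding param_index_def by auto
  then show ?thesis by simp
qed

theorem mainTheorem7: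
  fixes \<sigma> :: "real \<Rightarrow> real" and L :: nat and n :: "nat \<Rightarrow> nat" and x :: "nat \<Rightarrow> real"
    and \<nu> :: "'y measure" and t :: "'y \<Rightarrow> nat \<Rightarrow> real" and N :: nat and \<theta> :: params
  assumes "C2 \<sigma>"
    and "L \<ge> 1"
    and "\<forall>l\<in>{1..L}. n l \<ge> 1"
    and "N \<ge> 1"
    and "\<forall>a<n L. (\<lambda>y. t y a) \<in> borel_measurable \<nu>"
    and "nat_param_interior \<nu> t (n L) (net_out \<sigma> L n \<theta> x)"
  shows "sqrt (\<Sum>p\<in>param_index L n. \<Sum>q\<in>param_index L n. \<Sum>r\<in>param_index L n. \<Sum>s\<in>param_index L n.
             (covariance (sample_law \<sigma> L n x \<nu> t N \<theta>)
                (I2hat \<sigma> L n x \<nu> t N \<theta> p q) (I2hat \<sigma> L n x \<nu> t N \<theta> r s))\<^sup>2)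
         \<le> (1 / real N)
           * (\<Sum>a<n L. \<Sum>p\<in>param_index L n. \<Sum>q\<in>param_index L n.
                (partial2 p q (\<lambda>W. net_out \<sigma> L n W x a) \<theta>)\<^sup>2)
           * sqrt (\<Sum>a<n L. \<Sum>b<n L.
                (covariance (model_dist \<nu> t (n L) (net_out \<sigma> L n \<theta> x)) (\<lambda>y. t y a) (\<lambda>y. t y b))\<^sup>2)"
proof -
  let ?H = "\<lambda>a p q. partial2 p q (\<lambda>W. net_out \<sigma> L n W x a) \<theta>"
  let ?C = "\<lambda>a b. covariance (model_dist \<nu> t (n L) (net_out \<sigma> L n \<theta> x)) (\<lambda>y. t y a) (\<lambda>y. t y b)"
  obtain \<epsilon> where box: "exp_family_box \<nu> t (n L) (net_out \<sigma> L n \<theta> x) \<epsilon>"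
    using assms(5,6) unfolding nat_param_interior_def exp_family_box_def by blast
  interpret exp_family_box \<nu> t "n L" "net_out \<sigma> L n \<theta> x" \<epsilon>
    by (fact box)
  have "covariance (sample_law \<sigma> L n x \<nu> t N \<theta>) (I2hat \<sigma> L n x \<nu> t N \<theta> p q) (I2hat \<sigma> L n x \<nu> t N \<theta> r s)
      = (1 / real N) * (\<Sum>a<n L. \<Sum>b<n L. ?H a p q * ?H b r s * ?C a b)" for p q r s
  proof (cases "emeasure \<nu> (space \<nu>) = 0")
    case True
    with emeasure_space_model_dist_null assms(4) show ?thesis
      unfolding sample_law_def by (simp add: covariance_null_space emeasure_space_PiM_null[of _ 0])
  next
    case False
    interpret network_exp_family \<sigma> L n x \<nu> t \<theta> \<epsilon>
      by unfold_locales (use False assms(1-3) in auto)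
    show ?thesis
      using covariance_I2hat[OF assms(4)] unfolding hess_out_def .
  qed
  then show ?thesis
    using assms(4) by (simp only:) (rule frobenius_bilinear_bound[OF finite_param_index]; simp)
qed

end
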